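(* Let $\epsilon=\epsilon_1\cdots\epsilon_n$ be an inversion sequence to which Algorithm A (described below) is applied, and let $\epsilon'=\epsilon'_1\cdots\epsilon'_n$ be the resulting sequence. If the entry in position $i$ is replaced during the algorithm (i.e. an assignment to $\mathrm{seq}[i]$ is made), then (i) $\epsilon_i<\epsilon_{i+1}$, and (ii) the replacement entry satisfies $\epsilon'_i<\epsilon_{i+1}$.
   Context: An inversion sequence of length $n$ is an integer sequence with $0\le\epsilon_i<i$ for all $i$. The reduction of an integer word replaces each occurrence of its $k$-th smallest distinct value by $k-1$; a consecutive pattern $\underline{p_1p_2p_3p_4}$ occurs in a sequence at position $i$ if the reduction of its entries in positions $i,\dots,i+3$ equals $p_1p_2p_3p_4$. Let $p=\underline{0102}$ and $q=\underline{0112}$. Algorithm A, on input an integer sequence $\mathrm{seq}=\epsilon_1\cdots\epsilon_n$: let $E_p$, $E_q$ be the sets of positions of occurrences of $p$, resp. $q$, in the input sequence; set $\mathrm{last}:=$ null. For $i=1,2,\dots,n$ in order: let $N_p,N_q$ be the sets of positions of occurrences of $p$, resp. $q$, in the current sequence. If $i-2\in E_p$: set $\mathrm{last}:=\mathrm{seq}[i]$ and $\mathrm{seq}[i]:=\mathrm{seq}[i-1]$. Else if $i-2\in E_q$: set $\mathrm{last}:=\mathrm{seq}[i]$ and $\mathrm{seq}[i]:=\mathrm{seq}[i-2]$. Else if $i-2\in N_p$ or $i-2\in N_q$: swap the values of $\mathrm{seq}[i]$ and $\mathrm{last}$. Output $\mathrm{seq}$. *)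

theory Defs
  imports Main
begin

text \<open>Sequences are lists of naturals; positions are 1-based: the entry at
position i of xs is xs ! (i - 1).\<close>

definition entry :: "nat list \<Rightarrow> nat \<Rightarrow> nat" where
  "entry xs i = xs ! (i - 1)"

definition inversion_seq :: "nat list \<Rightarrow> bool" where
  "inversion_seq xs \<longleftrightarrow> (\<forall>i\<in>{1..length xs}. entry xs i < i)"

definition reduction :: "nat list \<Rightarrow> nat list" where
  "reduction w = map (\<lambda>x. card {y \<in> set w. y < x}) w"

definition occurs_at :: "nat list \<Rightarrow> nat list \<Rightarrow> nat \<Rightarrow> bool" where
  "occurs_at pat xs i \<longleftrightarrow> 1 \<le> i \<and> i + 3 \<le> length xs \<and>
     reduction (take 4 (drop (i - 1) xs)) = pat"

definition pat_p :: "nat list" where "pat_p = [0,1,0,2]"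
definition pat_q :: "nat list" where "pat_q = [0,1,1,2]"

text \<open>State of Algorithm A: current sequence, register last (None = null),
and the set of positions to which an assignment has been made.
One step of the loop for index i; eps is the input sequence (for E_p, E_q).\<close>
definition algA_step ::
  "nat list \<Rightarrow> nat \<Rightarrow> nat list \<times> nat option \<times> nat set \<Rightarrow> nat list \<times> nat option \<times> nat set" where
  "algA_step eps i st = (case st of (s, lst, A) \<Rightarrow>
     if i \<ge> 3 \<and> occurs_at pat_p eps (i - 2) then
       (s[i - 1 := entry s (i - 1)], Some (entry s i), insert i A)
     else if i \<ge> 3 \<and> occurs_at pat_q eps (i - 2) then
       (s[i - 1 := entry s (i - 2)], Some (entry s i), insert i A)
     else if i \<ge> 3 \<and> (occurs_at pat_p s (i - 2) \<or> occurs_at pat_q s (i - 2)) then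
       (s[i - 1 := the lst], Some (entry s i), insert i A)
     else (s, lst, A))"

definition algA_run :: "nat list \<Rightarrow> nat list \<times> nat option \<times> nat set" where
  "algA_run eps = fold (algA_step eps) [1..<length eps + 1] (eps, None, {})"

definition algA :: "nat list \<Rightarrow> nat list" where
  "algA eps = fst (algA_run eps)"

definition algA_assigned :: "nat list \<Rightarrow> nat set" where
  "algA_assigned eps = snd (snd (algA_run eps))"

end

theory Submission
  imports Defs
begin

text \<open>The loop maintains an invariant: the assigned positions form a set A of already
processed indices; positions outside A keep their input values; every j in A is an ascent
of the input, and the value written there lies below the input value at j + 1; and
last holds the input value at Max A. In an occurrence of 0102 or 0112 the fourth entry
is strictly the largest; since a current entry at j is at most the larger of the input
entries at j and j + 1, this settles the branches triggered by E_p and E_q. In the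
branch triggered by N_p or N_q the current window differs from the input window, so
i - 2 or i - 1 was assigned already, and last holds the input value at one of these two
positions, which is again below the value at i + 1.\<close>

lemma reduction_nth_less_iff:
  assumes "k < length w" "l < length w"
  shows "reduction w ! k < reduction w ! l \<longleftrightarrow> w ! k < w ! l"
proof -
  let ?below = "\<lambda>x. {y \<in> set w. y < x}"
  have strict: "card (?below x) < card (?below y)" if "x < y" "x \<in> set w" for x y
    by (rule psubset_card_mono) (use that in auto)
  have mono: "card (?below y) \<le> card (?below x)" if "y \<le> x" for x y
    by (rule card_mono) (use that in auto)
  have "reduction w ! k = card (?below (w ! k))" "reduction w ! l = card (?below (w ! l))"
    using assms by (simp_all add: reduction_def)
  then show ?thesis
    using strict[of "w ! k" "w ! l"] mono[of "w ! l" "w ! k"] nth_mem[OF assms(1)] by linarith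
qed

lemma nth_window:
  assumes "1 \<le> j" "j + 3 \<le> length xs" "m < 4"
  shows "take 4 (drop (j - 1) xs) ! m = entry xs (j + m)"
  using assms by (simp add: entry_def add.commute)

lemma occurs_at_less_iff:
  assumes "occurs_at pat xs j" "k < 4" "l < 4"
  shows "pat ! k < pat ! l \<longleftrightarrow> entry xs (j + k) < entry xs (j + l)"
proof -
  let ?w = "take 4 (drop (j - 1) xs)"
  from assms(1) have j: "1 \<le> j" "j + 3 \<le> length xs" and pat: "pat = reduction ?w"
    unfolding occurs_at_def by auto
  have "length ?w = 4" using j by simp
  then show ?thesis
    using reduction_nth_less_iff[of k ?w l] assms(2,3) nth_window[OF j] pat by simp
qed

lemma occurs_at_cong:
  assumes "length s = length xs" "\<And>m. m < 4 \<Longrightarrow> entry s (j + m) = entry xs (j + m)"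
  shows "occurs_at pat s j \<longleftrightarrow> occurs_at pat xs j"
proof -
  have "take 4 (drop (j - 1) s) = take 4 (drop (j - 1) xs)" if "1 \<le> j" "j + 3 \<le> length xs"
  proof (rule nth_equalityI)
    fix m assume "m < length (take 4 (drop (j - 1) s))"
    then show "take 4 (drop (j - 1) s) ! m = take 4 (drop (j - 1) xs) ! m"
      using that assms nth_window[of j s m] nth_window[of j xs m] by simp
  qed (use that assms(1) in simp)
  then show ?thesis using assms(1) unfolding occurs_at_def by auto
qed

lemma occurs_at_pq_last_greatest:
  assumes "occurs_at pat_p xs j \<or> occurs_at pat_q xs j" "k < 3"
  shows "entry xs (j + k) < entry xs (j + 3)"
proof -
  obtain pat where occ: "occurs_at pat xs j" and "pat = pat_p \<or> pat = pat_q"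
    using assms(1) by blast
  moreover have "k = 0 \<or> k = 1 \<or> k = 2" using assms(2) by arith
  ultimately have "pat ! k < pat ! 3" by (auto simp: pat_p_def pat_q_def)
  then show ?thesis using occurs_at_less_iff[OF occ] assms(2) by simp
qed

definition algA_invariant :: "nat list \<Rightarrow> nat \<Rightarrow> nat list \<times> nat option \<times> nat set \<Rightarrow> bool" where
  "algA_invariant eps k = (\<lambda>(s, lst, A).
     length s = length eps \<and> A \<subseteq> {1..k} \<and>
     (\<forall>m. 1 \<le> m \<longrightarrow> m \<le> length eps \<longrightarrow> m \<notin> A \<longrightarrow> entry s m = entry eps m) \<and>
     (\<forall>j\<in>A. j + 1 \<le> length eps \<and> entry eps j < entry eps (j + 1) \<and> entry s j < entry eps (j + 1)) \<and>
     (A \<noteq> {} \<longrightarrow> lst = Some (entry eps (Max A))))"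

lemma entry_list_update:
  assumes "1 \<le> m" "1 \<le> i" "i \<le> length s"
  shows "entry (s[i - 1 := v]) m = (if m = i then v else entry s m)"
  using assms by (auto simp: entry_def nth_list_update)

lemma algA_invariant_untouched:
  assumes "algA_invariant eps k (s, lst, A)" "k < m" "m \<le> length eps"
  shows "entry s m = entry eps m"
proof -
  have "m \<notin> A" using assms(1,2) unfolding algA_invariant_def by auto
  with assms show ?thesis unfolding algA_invariant_def by auto
qed

lemma algA_invariant_entry_le_max:
  assumes "algA_invariant eps k (s, lst, A)" "1 \<le> j" "j + 1 \<le> length eps"
  shows "entry s j \<le> max (entry eps j) (entry eps (j + 1))"
  using assms unfolding algA_invariant_def by (cases "j \<in> A") auto

lemma algA_invariant_assign:
  assumes inv: "algA_invariant eps k (s, lst, A)" and i: "i = Suc k" "i + 1 \<le> length eps"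
    and ascent: "entry eps i < entry eps (i + 1)" and v: "v < entry eps (i + 1)"
  shows "algA_invariant eps i (s[i - 1 := v], Some (entry s i), insert i A)"
proof -
  from inv have len: "length s = length eps" and A: "A \<subseteq> {1..k}"
    and kept: "\<forall>m. 1 \<le> m \<longrightarrow> m \<le> length eps \<longrightarrow> m \<notin> A \<longrightarrow> entry s m = entry eps m"
    and assigned: "\<forall>j\<in>A. j + 1 \<le> length eps \<and> entry eps j < entry eps (j + 1) \<and> entry s j < entry eps (j + 1)"
    unfolding algA_invariant_def by auto
  have "finite A" using A finite_subset by blast
  then have "Max (insert i A) = i" using A i by (intro Max_eqI) auto
  moreover have "entry s i = entry eps i" using algA_invariant_untouched[OF inv] i by simp
  moreover have "\<And>m. 1 \<le> m \<Longrightarrow> entry (s[i - 1 := v]) m = (if m = i then v else entry s m)"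
    using i len by (intro entry_list_update) auto
  ultimately show ?thesis
    using len A kept assigned i ascent v unfolding algA_invariant_def by auto
qed

lemma algA_invariant_copy:
  assumes inv: "algA_invariant eps k (s, lst, A)" and i: "i = Suc k" "3 \<le> i"
    and occ: "occurs_at pat_p eps (i - 2) \<or> occurs_at pat_q eps (i - 2)"
    and j: "j = i - 2 \<or> j = i - 1"
  shows "algA_invariant eps i (s[i - 1 := entry s j], Some (entry s i), insert i A)"
proof -
  have idx: "i - 2 + 1 = i - 1" "i - 2 + 2 = i" "i - 2 + 3 = i + 1" using i by auto
  have bound: "i + 1 \<le> length eps" using occ idx unfolding occurs_at_def by auto
  have greatest: "entry eps (i - 2 + m) < entry eps (i + 1)" if "m < 3" for m
    using occurs_at_pq_last_greatest[OF occ that] idx by simp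
  have "1 \<le> j" "j + 1 \<le> length eps" using j i bound by auto
  then have "entry s j \<le> max (entry eps j) (entry eps (j + 1))"
    by (rule algA_invariant_entry_le_max[OF inv])
  also have "\<dots> < entry eps (i + 1)"
    using greatest[of 0] greatest[of 1] greatest[of 2] j idx by auto
  finally show ?thesis
    using algA_invariant_assign[OF inv i(1) bound] greatest[of 2] idx by simp
qed

lemma algA_invariant_swap_bounds:
  assumes inv: "algA_invariant eps k (s, lst, A)" and i: "i = Suc k" "3 \<le> i"
    and current: "occurs_at pat_p s (i - 2) \<or> occurs_at pat_q s (i - 2)"
    and no_input: "\<not> occurs_at pat_p eps (i - 2)" "\<not> occurs_at pat_q eps (i - 2)"
  shows "i + 1 \<le> length eps \<and> entry eps i < entry eps (i + 1) \<and> the lst < entry eps (i + 1)"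
proof -
  from inv have len: "length s = length eps" and A: "A \<subseteq> {1..k}"
    and kept: "\<forall>m. 1 \<le> m \<longrightarrow> m \<le> length eps \<longrightarrow> m \<notin> A \<longrightarrow> entry s m = entry eps m"
    and assigned: "\<forall>j\<in>A. entry eps j < entry eps (j + 1)"
    and lst: "A \<noteq> {} \<longrightarrow> lst = Some (entry eps (Max A))"
    unfolding algA_invariant_def by auto
  have idx: "i - 2 + 1 = i - 1" "i - 2 + 2 = i" "i - 2 + 3 = i + 1" "i - 1 + 1 = i"
    using i by auto
  have bound: "i + 1 \<le> length eps"
    using current len idx unfolding occurs_at_def by auto
  have greatest: "entry s (i - 1) < entry s (i + 1)" "entry s i < entry s (i + 1)"
    using occurs_at_pq_last_greatest[OF current, of 1] occurs_at_pq_last_greatest[OF current, of 2] idx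
    by auto
  have fresh: "entry s i = entry eps i" "entry s (i + 1) = entry eps (i + 1)"
    using algA_invariant_untouched[OF inv] i bound by auto
  have "i - 2 \<in> A \<or> i - 1 \<in> A"
  proof (rule ccontr)
    assume unassigned: "\<not> (i - 2 \<in> A \<or> i - 1 \<in> A)"
    then have "entry s (i - 2 + m) = entry eps (i - 2 + m)" if "m < 4" for m
    proof -
      have "m = 0 \<or> m = 1 \<or> m = 2 \<or> m = 3" using that by arith
      then show ?thesis using unassigned kept fresh i bound idx by auto
    qed
    then have "occurs_at pat s (i - 2) \<longleftrightarrow> occurs_at pat eps (i - 2)" for pat
      using len by (intro occurs_at_cong)
    with current no_input show False by auto
  qed
  moreover have fin: "finite A" using A finite_subset by blast
  ultimately have nonempty: "A \<noteq> {}" and lower: "i - 2 \<le> Max A"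
    by (auto dest: Max_ge[OF fin])
  have upper: "Max A \<le> i - 1" using Max_in[OF fin nonempty] A i by auto
  have max_in: "Max A \<in> A" using Max_in[OF fin nonempty] .
  consider "Max A = i - 1" | "Max A = i - 2" "i - 1 \<notin> A"
    using lower upper Max_ge[OF fin, of "i - 1"] by fastforce
  then have "the lst < entry eps (i + 1)"
  proof cases
    case 1
    then show ?thesis using assigned max_in lst nonempty idx greatest fresh by fastforce
  next
    case 2
    then have "entry s (i - 1) = entry eps (i - 1)" using kept i bound by auto
    with 2 show ?thesis using assigned max_in lst nonempty idx greatest fresh by fastforce
  qed
  with bound greatest fresh show ?thesis by simp
qed

lemma algA_invariant_step:
  assumes inv: "algA_invariant eps k st"
  shows "algA_invariant eps (Suc k) (algA_step eps (Suc k) st)"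
proof -
  obtain s lst A where st: "st = (s, lst, A)" by (cases st)
  define i where "i = Suc k"
  have inv': "algA_invariant eps k (s, lst, A)" using inv st by simp
  let ?occ = "\<lambda>xs. occurs_at pat_p xs (i - 2) \<or> occurs_at pat_q xs (i - 2)"
  consider (input_p) "3 \<le> i" "occurs_at pat_p eps (i - 2)"
    | (input_q) "3 \<le> i" "\<not> occurs_at pat_p eps (i - 2)" "occurs_at pat_q eps (i - 2)"
    | (current) "3 \<le> i" "\<not> ?occ eps" "?occ s"
    | (skip) "\<not> (3 \<le> i \<and> (?occ eps \<or> ?occ s))"
    by blast
  then show ?thesis
  proof cases
    case input_p
    then have "algA_step eps i st = (s[i - 1 := entry s (i - 1)], Some (entry s i), insert i A)"
      by (simp add: algA_step_def st)
    then show ?thesis using algA_invariant_copy[OF inv' i_def] input_p i_def by simp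
  next
    case input_q
    then have "algA_step eps i st = (s[i - 1 := entry s (i - 2)], Some (entry s i), insert i A)"
      by (simp add: algA_step_def st)
    then show ?thesis using algA_invariant_copy[OF inv' i_def] input_q i_def by simp
  next
    case current
    then have "algA_step eps i st = (s[i - 1 := the lst], Some (entry s i), insert i A)"
      by (simp add: algA_step_def st)
    moreover have "i + 1 \<le> length eps \<and> entry eps i < entry eps (i + 1) \<and> the lst < entry eps (i + 1)"
      using current by (intro algA_invariant_swap_bounds[OF inv' i_def]) auto
    ultimately show ?thesis using algA_invariant_assign[OF inv' i_def] i_def by simp
  next
    case skip
    then have "algA_step eps i st = st"
      by (auto simp: algA_step_def st)
    with inv' st i_def show ?thesis by (auto simp: algA_invariant_def)
  qed
qed

lemma algA_invariant_run:
  "algA_invariant eps k (fold (algA_step eps) [1..<k + 1] (eps, None, {}))"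
proof (induction k)
  case 0
  then show ?case by (simp add: algA_invariant_def)
next
  case (Suc k)
  then show ?case using algA_invariant_step[of eps k] by simp
qed

theorem lemma4:
  fixes eps :: "nat list" and i :: nat
  assumes "inversion_seq eps"
    and "i \<in> algA_assigned eps"
  shows "i + 1 \<le> length eps \<and> entry eps i < entry eps (i + 1)
         \<and> entry (algA eps) i < entry eps (i + 1)"
proof -
  have "algA_invariant eps (length eps) (algA_run eps)"
    unfolding algA_run_def by (rule algA_invariant_run)
  then show ?thesis
    using assms(2) unfolding algA_assigned_def algA_def algA_invariant_def
    by (cases "algA_run eps") auto
qed

end
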